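(* Let $\mathcal{S}$ be a simple-minded system of $A_n^{dn}$-$\underline{\mathrm{mod}}$ and let $\sigma$ be the associated permutation of $\underline{n}$. Let $i\in\underline{n}$ and suppose the $\sigma$-orbit of $i$ has $s_i\ge3$ elements. Then for each $2\le t\le s_i-1$, the vertex $\sigma^t(i)$ lies on the arc from $i$ to $\sigma^{t-1}(i)$, i.e. $\sigma^t(i)\in\{i,\overline{i+1},\dots,\sigma^{t-1}(i)\}$.
   Context: $A_n^{dn}=kQ/I$ ($k$ algebraically closed), $Q$ the cyclic quiver with vertices $1,\dots,n$ and arrows $i\to i+1$, $n\to 1$, $I$ generated by all paths of length $dn+1$. $\underline{n}=\{1,\dots,n\}$; for $a\in\mathbb{Z}$, $\bar a\in\underline{n}$ with $a\equiv\bar a\pmod n$; the arc from $a$ to $b$ is the vertex set $\{a,\overline{a+1},\dots,b\}$ of the shortest path from $a$ to $b$ in $Q$ ($\{a\}$ if $a=b$). $\underline{\mathrm{Hom}}$ is Hom modulo maps factoring through projectives. A simple-minded system (sms) is a family $\mathcal{S}$ of indecomposable non-projective modules with $\underline{\mathrm{Hom}}(S,T)=0$ for distinct $S,T\in\mathcal{S}$, $\underline{\mathrm{Hom}}(S,S)\cong k$, and such that each indecomposable non-projective $X$ has $\underline{\mathrm{Hom}}(X,S)\neq 0$ for some $S\in\mathcal{S}$. For an sms, each simple module is the top of exactly one object of $\mathcal{S}$ and the socle of exactly one object of $\mathcal{S}$; the associated permutation $\sigma$ is defined by $\sigma(a)=b$ if some object of $\mathcal{S}$ has top $S_a$ and socle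 $S_b$. *)

theory Defs
  imports Main "HOL-Number_Theory.Cong"
begin

text \<open>Combinatorial model of the stable module category of the self-injective
Nakayama algebra A_n^{dn} = kQ/I (Q cyclic with n vertices, I = all paths of
length dn+1).  Every indecomposable module is uniserial and is determined up to
isomorphism by its top S_a and its length l; we write it as the pair (a,l),
1 \<le> a \<le> n, 1 \<le> l \<le> dn+1.  The projective-injective ones are exactly those of
length dn+1, so the indecomposable non-projective modules are the pairs with
1 \<le> l \<le> dn.\<close>

type_synonym umod = "nat \<times> nat"

definition vbar :: "nat \<Rightarrow> int \<Rightarrow> nat" where
  "vbar n x = nat ((x - 1) mod int n) + 1"

definition ind_nonproj :: "nat \<Rightarrow> nat \<Rightarrow> umod \<Rightarrow> bool" where
  "ind_nonproj n d X \<longleftrightarrow> fst X \<in> {1..n} \<and> 1 \<le> snd X \<and> snd X \<le> d * n"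

definition top_of :: "umod \<Rightarrow> nat" where
  "top_of X = fst X"

text \<open>Socle of the uniserial module with top a and length l is S_{a+l-1}.\<close>
definition soc_of :: "nat \<Rightarrow> umod \<Rightarrow> nat" where
  "soc_of n X = vbar n (int (fst X) + int (snd X) - 1)"

text \<open>A basis of Hom(M(a,l), M(b,m)) is given
by the maps f_j with image of length j, where 1 \<le> j \<le> min l m and
a \<equiv> b + m - j (mod n); f_j factors through a projective iff
j \<le> l + m - (dn+1).\<close>
definition stable_hom_dim :: "nat \<Rightarrow> nat \<Rightarrow> umod \<Rightarrow> umod \<Rightarrow> nat" where
  "stable_hom_dim n d X Y =
     card {j::nat. max 1 (snd X + snd Y - d * n) \<le> j \<and> j \<le> min (snd X) (snd Y) \<and>
                   [int j = int (fst Y) + int (snd Y) - int (fst X)] (mod int n)}"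

definition is_sms :: "nat \<Rightarrow> nat \<Rightarrow> umod set \<Rightarrow> bool" where
  "is_sms n d S \<longleftrightarrow>
     (\<forall>X\<in>S. ind_nonproj n d X) \<and>
     (\<forall>X\<in>S. \<forall>Y\<in>S. X \<noteq> Y \<longrightarrow> stable_hom_dim n d X Y = 0) \<and>
     (\<forall>X\<in>S. stable_hom_dim n d X X = 1) \<and>
     (\<forall>X. ind_nonproj n d X \<longrightarrow> (\<exists>Y\<in>S. stable_hom_dim n d X Y \<noteq> 0))"

definition sms_perm :: "nat \<Rightarrow> umod set \<Rightarrow> nat \<Rightarrow> nat" where
  "sms_perm n S a = (THE b. \<exists>X\<in>S. top_of X = a \<and> soc_of n X = b)"

definition orbit_size :: "(nat \<Rightarrow> nat) \<Rightarrow> nat \<Rightarrow> nat" where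
  "orbit_size \<sigma> i = card {(\<sigma> ^^ k) i | k. True}"

definition arc :: "nat \<Rightarrow> nat \<Rightarrow> nat \<Rightarrow> nat set" where
  "arc n a b = {vbar n (int a + int k) | k. k \<le> nat ((int b - int a) mod int n)}"

end

theory Submission
  imports Defs
begin

text \<open>For an object X of S with top a, its socle is \<sigma>(a); call the vertices strictly inside
the path from \<sigma>(a) to a in Q the gap of X. If the top c of another object Y of S lies in
the gap of X, so does its socle \<sigma>(c): otherwise an explicit map X \<rightarrow> Y, with image long
enough not to factor through a projective, contradicts Hom-orthogonality. Hence the gap
of x = \<sigma>^(t-1)(i) is \<sigma>-stable. If \<sigma>(x) were not on the arc from i to x, then i would lie in
that gap, hence so would \<sigma>^(t-1)(i) = x itself, which is absurd.\<close>

definition cdist :: "nat \<Rightarrow> nat \<Rightarrow> nat \<Rightarrow> int" where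
  "cdist n x y = (int y - int x) mod int n"

definition cyc_between :: "nat \<Rightarrow> nat \<Rightarrow> nat \<Rightarrow> nat \<Rightarrow> bool" where
  "cyc_between n x y z \<longleftrightarrow> 0 < cdist n x y \<and> cdist n x y < cdist n x z"

lemma vbar_range: "n \<ge> 1 \<Longrightarrow> vbar n x \<in> {1..n}"
  unfolding vbar_def using pos_mod_bound[of "int n" "x - 1"] by (simp add: Suc_le_eq nat_less_iff)

lemma cong_vbar: "n \<ge> 1 \<Longrightarrow> [int (vbar n x) = x] (mod int n)"
  unfolding vbar_def cong_def by (simp add: mod_add_right_eq[of 1, simplified])

lemma vbar_eq_iff:
  assumes "n \<ge> 1" and "y \<in> {1..n}"
  shows "vbar n x = y \<longleftrightarrow> [x = int y] (mod int n)"
proof -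
  have "(int y - 1) mod int n = int y - 1" using assms by simp
  then have "vbar n x = y \<longleftrightarrow> (x - 1) mod int n = (int y - 1) mod int n"
    using assms unfolding vbar_def by auto
  also have "\<dots> \<longleftrightarrow> [x = int y] (mod int n)"
    unfolding cong_def by (metis mod_diff_left_eq diff_add_cancel mod_add_left_eq)
  finally show ?thesis .
qed

lemma cdist_range: "n \<ge> 1 \<Longrightarrow> 0 \<le> cdist n x y \<and> cdist n x y < int n"
  unfolding cdist_def by simp

lemma cdist_eq_0_iff:
  assumes "x \<in> {1..n}" and "y \<in> {1..n}"
  shows "cdist n x y = 0 \<longleftrightarrow> x = y"
proof
  assume "cdist n x y = 0"
  then have "int n dvd int y - int x" unfolding cdist_def by (simp add: mod_eq_0_iff_dvd)
  moreover have "\<bar>int y - int x\<bar> < int n" using assms by auto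
  ultimately have "int y - int x = 0" using dvd_imp_le_int[of "int y - int x" "int n"] by linarith
  then show "x = y" by simp
qed (simp add: cdist_def)

lemma mem_arcI:
  assumes "n \<ge> 1" and "y \<in> {1..n}" and "cdist n a y \<le> cdist n a b"
  shows "y \<in> arc n a b"
proof -
  define k where "k = nat (cdist n a y)"
  have "int k = cdist n a y" unfolding k_def using cdist_range[OF assms(1)] by simp
  then have "[int a + int k = int y] (mod int n)"
    unfolding cdist_def cong_def by (simp add: mod_add_right_eq)
  then have "vbar n (int a + int k) = y" using vbar_eq_iff[OF assms(1,2)] by blast
  moreover have "k \<le> nat ((int b - int a) mod int n)"
    using assms(3) unfolding k_def cdist_def by simp
  ultimately show ?thesis unfolding arc_def by blast
qed

lemma cyc_between_rotate:
  assumes "n \<ge> 1" and "cyc_between n i x y"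
  shows "cyc_between n y i x"
proof -
  define p q where "p = cdist n i x" and "q = cdist n i y"
  have p: "0 < p" "p < q" using assms(2) unfolding cyc_between_def p_def q_def by auto
  have q: "0 < q" "q < int n" using p cdist_range[OF assms(1)] unfolding q_def by auto
  have "cdist n y i = (- (int y - int i)) mod int n" unfolding cdist_def by simp
  also have "\<dots> = int n - q" using q unfolding q_def cdist_def by (simp only: zmod_zminus1_eq_if) simp
  finally have yi: "cdist n y i = int n - q" .
  have "cdist n y x = ((int x - int i) - (int y - int i)) mod int n" unfolding cdist_def by simp
  also have "\<dots> = (p - q) mod int n" unfolding p_def q_def cdist_def by (simp add: mod_diff_eq)
  also have "\<dots> = (p - q + int n) mod int n" by simp
  also have "\<dots> = p - q + int n" using p q by (intro mod_pos_pos_trivial) auto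
  finally have yx: "cdist n y x = p - q + int n" .
  show ?thesis unfolding cyc_between_def yi yx using p q by simp
qed

lemma cong_residue_bounds:
  fixes x r n d :: int
  assumes "[x = r] (mod n)" and "0 < r" "r \<le> n" and "1 \<le> x" "x \<le> n * d"
  shows "r \<le> x" and "x \<le> n * d - n + r"
proof -
  obtain q where q: "x = r + n * q"
    using cong_sym[OF assms(1)] unfolding cong_iff_lin by blast
  have "n * (-1) < n * q" using q assms(3,4) by linarith
  then have "0 \<le> q" using mult_less_cancel_left_pos[of n "-1" q] assms(2,3) by simp
  then show "r \<le> x" using q assms(2,3) by simp
  have "n * q < n * d" using q assms(2,5) by linarith
  then have "q \<le> d - 1" using mult_less_cancel_left_pos[of n q d] assms(2,3) by simp
  then have "n * q \<le> n * (d - 1)" using assms(2,3) by (intro mult_left_mono) auto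
  then show "x \<le> n * d - n + r" using q by (simp add: algebra_simps)
qed

lemma stable_hom_dim_neq_0_iff:
  "stable_hom_dim n d (a, l) (c, m) \<noteq> 0 \<longleftrightarrow>
    (\<exists>j::int. 1 \<le> j \<and> int l + int m - int (d * n) \<le> j \<and> j \<le> int l \<and> j \<le> int m \<and>
       [j = int c + int m - int a] (mod int n))"
  (is "?lhs \<longleftrightarrow> ?rhs")
proof -
  let ?J = "{j::nat. max 1 (l + m - d * n) \<le> j \<and> j \<le> min l m \<and>
                     [int j = int c + int m - int a] (mod int n)}"
  have "finite ?J" by (rule finite_subset[of _ "{..l}"]) auto
  then have "?lhs \<longleftrightarrow> ?J \<noteq> {}" unfolding stable_hom_dim_def by simp
  also have "\<dots> \<longleftrightarrow> ?rhs"
  proof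
    assume "?J \<noteq> {}"
    then obtain j where j: "j \<in> ?J" by blast
    then have "l + m \<le> j + d * n" by auto
    then have "int l + int m - int (d * n) \<le> int j" by linarith
    with j show ?rhs by (intro exI[of _ "int j"]) auto
  next
    assume ?rhs
    then obtain j where j: "1 \<le> j" "int l + int m - int (d * n) \<le> j" "j \<le> int l" "j \<le> int m"
      "[j = int c + int m - int a] (mod int n)" by blast
    then have "int (l + m) \<le> int (nat j + d * n)" by simp
    then have "l + m - d * n \<le> nat j" by linarith
    with j have "nat j \<in> ?J" by auto
    then show "?J \<noteq> {}" by blast
  qed
  finally show ?thesis .
qed

text \<open>Here l, m are the lengths of uniserial modules X, Y, and g, k, e the distances from the
socle of X to the top of X, the top of Y and the socle of Y.\<close>

lemma stable_hom_witness:
  fixes n d l m g k e :: int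
  assumes "0 < k" "k < g" "g \<le> e" "e \<le> n"
    and l: "[l = n - g + 1] (mod n)" "1 \<le> l" "l \<le> n * d"
    and m: "[m = e - k + 1] (mod n)" "1 \<le> m" "m \<le> n * d"
  shows "\<exists>j. 1 \<le> j \<and> l + m - n * d \<le> j \<and> j \<le> l \<and> j \<le> m \<and> [j = m - (g - k)] (mod n)"
proof -
  have "0 < n - g + 1" "n - g + 1 \<le> n" "0 < e - k + 1" "e - k + 1 \<le> n"
    using assms(1-4) by linarith+
  note lb = cong_residue_bounds[OF l(1) this(1,2) l(2,3)]
    and mb = cong_residue_bounds[OF m(1) this(3,4) m(2,3)]
  show ?thesis
  proof (cases "l \<le> m")
    case True
    have "[l - (n - e) = e - g + 1] (mod n)"
      using cong_diff[OF l(1) cong_refl[of "n - e"]] by (simp add: algebra_simps)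
    moreover have "[m - (g - k) = e - g + 1] (mod n)"
      using cong_diff[OF m(1) cong_refl[of "g - k"]] by (simp add: algebra_simps)
    ultimately have "[l - (n - e) = m - (g - k)] (mod n)" by (rule cong_trans[OF _ cong_sym])
    moreover have "1 \<le> l - (n - e)" "l + m - n * d \<le> l - (n - e)"
      "l - (n - e) \<le> l" "l - (n - e) \<le> m"
      using True lb mb assms(1-4) by linarith+
    ultimately show ?thesis by (intro exI[of _ "l - (n - e)"]) simp
  next
    case False
    have "1 \<le> m - (g - k)" "l + m - n * d \<le> m - (g - k)"
      "m - (g - k) \<le> l" "m - (g - k) \<le> m"
      using False lb mb assms(1-4) by linarith+
    then show ?thesis by (intro exI[of _ "m - (g - k)"]) simp
  qed
qed

lemma cong_cdist: "[cdist n x y = int y - int x] (mod int n)"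
  unfolding cdist_def cong_def by simp

lemma cong_soc_of: "n \<ge> 1 \<Longrightarrow> [int (soc_of n (a, l)) = int a + int l - 1] (mod int n)"
  unfolding soc_of_def by (simp add: cong_vbar)

lemma stable_hom_nonzero_if_soc_eq:
  assumes n: "n \<ge> 1" and "ind_nonproj n d X" and "ind_nonproj n d Y" and "soc_of n X = soc_of n Y"
  shows "stable_hom_dim n d X Y \<noteq> 0 \<or> stable_hom_dim n d Y X \<noteq> 0"
proof -
  have into_longer: "stable_hom_dim n d (a, l) (c, m) \<noteq> 0"
    if "ind_nonproj n d (a, l)" "ind_nonproj n d (c, m)" "soc_of n (a, l) = soc_of n (c, m)" "l \<le> m"
    for a l c m
  proof -
    have "[int a + int l - 1 = int c + int m - 1] (mod int n)"
      using cong_soc_of[OF n, of a l] cong_soc_of[OF n, of c m] that(3)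
      by (metis cong_sym cong_trans)
    then have "[int l = int c + int m - int a] (mod int n)"
      unfolding cong_iff_lin by (auto simp: algebra_simps)
    then show ?thesis
      using that unfolding stable_hom_dim_neq_0_iff ind_nonproj_def
      by (intro exI[of _ "int l"]) (auto simp flip: of_nat_mult)
  qed
  obtain a l c m where "X = (a, l)" and "Y = (c, m)" by (cases X, cases Y)
  then show ?thesis
    using into_longer[of a l c m] into_longer[of c m a l] assms(2-4) by (cases "l \<le> m") auto
qed

lemma stable_hom_nonzero_if_top_eq:
  assumes "ind_nonproj n d X" and "ind_nonproj n d Y" and "fst X = fst Y"
  shows "stable_hom_dim n d X Y \<noteq> 0 \<or> stable_hom_dim n d Y X \<noteq> 0"
proof -
  have onto_shorter: "stable_hom_dim n d (a, m) (a, l) \<noteq> 0"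
    if "ind_nonproj n d (a, l)" "ind_nonproj n d (a, m)" "l \<le> m" for a l m
    using that unfolding stable_hom_dim_neq_0_iff ind_nonproj_def
    by (intro exI[of _ "int l"]) (auto simp flip: of_nat_mult)
  obtain a l m where "X = (a, l)" and "Y = (a, m)" using assms(3) by (cases X, cases Y) auto
  then show ?thesis
    using onto_shorter[of a l m] onto_shorter[of a m l] assms(1,2) by (cases "l \<le> m") auto
qed

lemma soc_of_eq_if_stable_hom_from_simple:
  assumes "n \<ge> 1" and "a \<in> {1..n}" and "stable_hom_dim n d (a, 1) (c, m) \<noteq> 0"
  shows "soc_of n (c, m) = a"
proof -
  obtain j :: int where "1 \<le> j" "j \<le> 1" "[j = int c + int m - int a] (mod int n)"
    using assms(3) unfolding stable_hom_dim_neq_0_iff by auto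
  then obtain q where "int c + int m - int a = 1 + int n * q"
    unfolding cong_iff_lin by auto
  then have "[int c + int m - 1 = int a] (mod int n)"
    unfolding cong_iff_lin by (intro exI[of _ "- q"]) (simp add: algebra_simps)
  then show ?thesis
    unfolding soc_of_def using vbar_eq_iff[OF assms(1,2)] by simp
qed

lemma cyc_between_soc_of_if_stable_hom_eq_0:
  assumes n: "n \<ge> 1" and X: "ind_nonproj n d (a, l)" and Y: "ind_nonproj n d (c, m)"
    and hom: "stable_hom_dim n d (a, l) (c, m) = 0"
    and between: "cyc_between n (soc_of n (a, l)) c a"
  shows "cyc_between n (soc_of n (a, l)) (soc_of n (c, m)) a"
proof (rule ccontr)
  assume not_between: "\<not> ?thesis"
  define s where "s = soc_of n (a, l)"
  define g k e' where "g = cdist n s a" and "k = cdist n s c" and "e' = cdist n s (soc_of n (c, m))"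
  define e where "e = (if e' = 0 then int n else e')"
    \<comment> \<open>a socle of Y equal to that of X lies outside the gap, at distance n rather than 0\<close>
  have bounds: "0 < k" "k < g" "g \<le> e" "e \<le> int n"
    using between not_between cdist_range[OF n, of s a] cdist_range[OF n, of s "soc_of n (c, m)"]
    unfolding cyc_between_def g_def k_def e'_def e_def s_def
    by (auto split: if_splits)
  obtain qs where qs: "int s = int a + int l - 1 + int n * qs"
    using cong_sym[OF cong_soc_of[OF n, of a l]] unfolding s_def cong_iff_lin by blast
  obtain qg where qg: "int a - int s = g + int n * qg"
    using cong_cdist[of n s a] unfolding g_def cong_iff_lin by blast
  obtain qk where qk: "int c - int s = k + int n * qk"
    using cong_cdist[of n s c] unfolding k_def cong_iff_lin by blast
  have "[e = e'] (mod int n)" unfolding e_def by (simp add: cong_def)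
  then obtain qe where qe: "int (soc_of n (c, m)) - int s = e + int n * qe"
    using cong_trans[OF _ cong_cdist[of n s "soc_of n (c, m)"]] unfolding e'_def cong_iff_lin
    by blast
  obtain qy where qy: "int (soc_of n (c, m)) = int c + int m - 1 + int n * qy"
    using cong_sym[OF cong_soc_of[OF n, of c m]] unfolding cong_iff_lin by blast
  have "[int l = int n - g + 1] (mod int n)"
    unfolding cong_iff_lin using qs qg by (intro exI[of _ "1 + qs + qg"]) (simp add: algebra_simps)
  moreover have "[int m = e - k + 1] (mod int n)"
    unfolding cong_iff_lin using qe qk qy by (intro exI[of _ "qy - qe + qk"]) (simp add: algebra_simps)
  ultimately obtain j where j: "1 \<le> j" "int l + int m - int n * int d \<le> j" "j \<le> int l" "j \<le> int m"
      "[j = int m - (g - k)] (mod int n)"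
    using stable_hom_witness[OF bounds, of "int l" "int d" "int m"] X Y unfolding ind_nonproj_def
    by (auto simp flip: of_nat_mult simp: mult.commute)
  have "[int m - (g - k) = int c + int m - int a] (mod int n)"
    unfolding cong_iff_lin using qg qk by (intro exI[of _ "qk - qg"]) (simp add: algebra_simps)
  with j have "stable_hom_dim n d (a, l) (c, m) \<noteq> 0"
    unfolding stable_hom_dim_neq_0_iff by (intro exI[of _ j]) (auto simp: mult.commute intro: cong_trans)
  with hom show False by contradiction
qed

lemma orbit_size_le_period:
  assumes "(f ^^ k) i = i" and "k \<ge> 1"
  shows "orbit_size f i \<le> k"
proof -
  have "{(f ^^ m) i | m. True} \<subseteq> (\<lambda>m. (f ^^ m) i) ` {..<k}"
  proof
    fix x assume "x \<in> {(f ^^ m) i | m. True}"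
    then obtain m where "x = (f ^^ m) i" by blast
    then have "x = (f ^^ (m mod k)) i" using funpow_mod_eq[of k f i m] assms(1) by simp
    moreover have "m mod k < k" using assms(2) by simp
    ultimately show "x \<in> (\<lambda>m. (f ^^ m) i) ` {..<k}" by blast
  qed
  then have "orbit_size f i \<le> card ((\<lambda>m. (f ^^ m) i) ` {..<k})"
    unfolding orbit_size_def by (intro card_mono) auto
  also have "\<dots> \<le> k" using card_image_le[of "{..<k}"] by simp
  finally show ?thesis .
qed

locale simple_minded_system =
  fixes n d :: nat and S :: "umod set"
  assumes n_ge_1: "n \<ge> 1" and d_ge_1: "d \<ge> 1" and is_sms: "is_sms n d S"
begin

lemma ind_nonproj_of_mem: "X \<in> S \<Longrightarrow> ind_nonproj n d X"
  using is_sms unfolding is_sms_def by blast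

lemma stable_hom_orthogonal:
  "X \<in> S \<Longrightarrow> Y \<in> S \<Longrightarrow> X \<noteq> Y \<Longrightarrow> stable_hom_dim n d X Y = 0"
  using is_sms unfolding is_sms_def by blast

lemma soc_of_image: "soc_of n ` S = {1..n}"
proof
  show "soc_of n ` S \<subseteq> {1..n}" unfolding soc_of_def using vbar_range[OF n_ge_1] by blast
  show "{1..n} \<subseteq> soc_of n ` S"
  proof
    fix a assume a: "a \<in> {1..n}"
    then have "ind_nonproj n d (a, 1)" using n_ge_1 d_ge_1 unfolding ind_nonproj_def by simp
    then obtain Y where Y: "Y \<in> S" "stable_hom_dim n d (a, 1) Y \<noteq> 0"
      using is_sms unfolding is_sms_def by blast
    then have "soc_of n Y = a"
      using soc_of_eq_if_stable_hom_from_simple[OF n_ge_1 a] by (cases Y) simp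
    with Y(1) show "a \<in> soc_of n ` S" by blast
  qed
qed

lemma inj_on_soc_of: "inj_on (soc_of n) S"
proof (rule inj_onI, rule ccontr)
  fix X Y assume X: "X \<in> S" and Y: "Y \<in> S" and eq: "soc_of n X = soc_of n Y" and "X \<noteq> Y"
  then have "stable_hom_dim n d X Y = 0" "stable_hom_dim n d Y X = 0"
    using stable_hom_orthogonal by auto
  with stable_hom_nonzero_if_soc_eq[OF n_ge_1 ind_nonproj_of_mem[OF X] ind_nonproj_of_mem[OF Y] eq]
  show False by simp
qed

lemma inj_on_fst: "inj_on fst S"
proof (rule inj_onI, rule ccontr)
  fix X Y assume X: "X \<in> S" and Y: "Y \<in> S" and eq: "fst X = fst Y" and "X \<noteq> Y"
  then have "stable_hom_dim n d X Y = 0" "stable_hom_dim n d Y X = 0"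
    using stable_hom_orthogonal by auto
  with stable_hom_nonzero_if_top_eq[OF ind_nonproj_of_mem[OF X] ind_nonproj_of_mem[OF Y] eq]
  show False by simp
qed

lemma fst_image: "fst ` S = {1..n}"
proof (rule card_subset_eq)
  show "fst ` S \<subseteq> {1..n}" using ind_nonproj_of_mem unfolding ind_nonproj_def by blast
  have "card (fst ` S) = card (soc_of n ` S)"
    using card_image[OF inj_on_fst] card_image[OF inj_on_soc_of] by simp
  then show "card (fst ` S) = card {1..n}" using soc_of_image by simp
qed simp

lemma ex_mem_with_top:
  assumes "a \<in> {1..n}"
  shows "\<exists>l. (a, l) \<in> S"
proof -
  have "a \<in> fst ` S" using assms fst_image by simp
  then obtain X where "X \<in> S" and "a = fst X" by (rule imageE)
  then show ?thesis by (intro exI[of _ "snd X"]) simp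
qed

lemma sms_perm_fst: "X \<in> S \<Longrightarrow> sms_perm n S (fst X) = soc_of n X"
  unfolding sms_perm_def top_of_def
  by (rule the_equality) (use inj_on_fst in \<open>auto dest: inj_onD\<close>)

lemma sms_perm_range:
  assumes "a \<in> {1..n}"
  shows "sms_perm n S a \<in> {1..n}"
proof -
  obtain l where X: "(a, l) \<in> S" using ex_mem_with_top[OF assms] by blast
  then have "sms_perm n S a = soc_of n (a, l)" using sms_perm_fst by fastforce
  with X show ?thesis using soc_of_image by blast
qed

lemma funpow_sms_perm_range: "a \<in> {1..n} \<Longrightarrow> (sms_perm n S ^^ k) a \<in> {1..n}"
  by (induction k) (simp_all only: funpow.simps o_apply id_apply sms_perm_range)

lemma cyc_between_sms_perm:
  assumes a: "a \<in> {1..n}" and c: "c \<in> {1..n}" and between: "cyc_between n (sms_perm n S a) c a"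
  shows "cyc_between n (sms_perm n S a) (sms_perm n S c) a"
proof -
  obtain l m where X: "(a, l) \<in> S" and Y: "(c, m) \<in> S"
    using ex_mem_with_top[OF a] ex_mem_with_top[OF c] by blast
  have "c \<noteq> a" using between unfolding cyc_between_def by auto
  then have "stable_hom_dim n d (a, l) (c, m) = 0" using stable_hom_orthogonal[OF X Y] by simp
  from cyc_between_soc_of_if_stable_hom_eq_0[OF n_ge_1 ind_nonproj_of_mem[OF X] ind_nonproj_of_mem[OF Y] this]
  show ?thesis using between sms_perm_fst[OF X] sms_perm_fst[OF Y] by simp
qed

lemma cyc_between_funpow_sms_perm:
  assumes "a \<in> {1..n}" and "c \<in> {1..n}" and "cyc_between n (sms_perm n S a) c a"
  shows "cyc_between n (sms_perm n S a) ((sms_perm n S ^^ k) c) a"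
proof (induction k)
  case (Suc k)
  then show ?case
    using cyc_between_sms_perm[OF assms(1) funpow_sms_perm_range[OF assms(2)]] by simp
qed (simp add: assms(3))

end

theorem corollary4p4:
  fixes n d i t :: nat and S :: "umod set"
  assumes "n \<ge> 1" and "d \<ge> 1"
    and "is_sms n d S"
    and "i \<in> {1..n}"
    and "orbit_size (sms_perm n S) i \<ge> 3"
    and "2 \<le> t" and "t \<le> orbit_size (sms_perm n S) i - 1"
  shows "(sms_perm n S ^^ t) i \<in> arc n i ((sms_perm n S ^^ (t - 1)) i)"
proof (rule ccontr)
  interpret simple_minded_system n d S using assms(1-3) by unfold_locales
  let ?\<sigma> = "sms_perm n S"
  define x where "x = (?\<sigma> ^^ (t - 1)) i"
  have \<sigma>x: "(?\<sigma> ^^ t) i = ?\<sigma> x"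
    unfolding x_def using assms(6) by (cases t) simp_all
  have x: "x \<in> {1..n}" unfolding x_def by (rule funpow_sms_perm_range[OF assms(4)])
  have "x \<noteq> i"
  proof
    assume "x = i"
    then have "orbit_size ?\<sigma> i \<le> t - 1"
      using orbit_size_le_period[where f = ?\<sigma> and k = "t - 1" and i = i] assms(6)
      unfolding x_def by simp
    with assms(5,7) show False by linarith
  qed
  then have "cdist n i x \<noteq> 0" using cdist_eq_0_iff[OF assms(4) x] by simp
  moreover assume "\<not> ?thesis"
  then have "?\<sigma> x \<notin> arc n i x" unfolding \<sigma>x x_def[symmetric] .
  then have "cdist n i x < cdist n i (?\<sigma> x)"
    using mem_arcI[OF assms(1) sms_perm_range[OF x]] by (meson linorder_not_le)
  ultimately have "cyc_between n i x (?\<sigma> x)"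
    unfolding cyc_between_def using cdist_range[OF assms(1), of i x] by simp
  then have "cyc_between n (?\<sigma> x) i x" by (rule cyc_between_rotate[OF assms(1)])
  then have "cyc_between n (?\<sigma> x) x x"
    using cyc_between_funpow_sms_perm[OF x assms(4), of "t - 1"] unfolding x_def by simp
  then show False unfolding cyc_between_def by simp
qed

end
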